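(* For all $t\in\mathbb{R}$ and all $s\in[t+\tfrac13,\,t+\tfrac23)$, one has $\mathbf{R}(t)\cdot\mathbf{R}(s)\le 0$.
   Context: For $t\in[-\tfrac12,0)$ define points of $S^2\subset\mathbb{R}^3$: $\mathbf r_1(t)=\big(\tfrac{1}{\sqrt2},\,t,\,\sqrt{\tfrac12-t^2}\big)$, $\mathbf r_2(t)=\Big(-\tfrac{\frac12+t}{1+t},\,\tfrac1{\sqrt2},\,\tfrac1{\sqrt2}\tfrac{\sqrt{\frac12-t^2}}{1+t}\Big)$, $\mathbf r_3(t)=\mathbf r_1(t)\times\mathbf r_2(t)=\Big(-\tfrac1{\sqrt2}\tfrac{\sqrt{\frac12-t^2}}{1+t},\,-\sqrt{\tfrac12-t^2},\,\tfrac{\frac12+t+t^2}{1+t}\Big)$. Let $R_{\pi/2}$ be the rotation $(x,y,z)\mapsto(-y,x,z)$ (by $\pi/2$ about the $z$-axis). Define $\mathbf r_0:[0,\tfrac14)\to S^2$ by $\mathbf r_0(t)=\mathbf r_1(6t-\tfrac12)$ for $t\in[0,\tfrac1{12})$, $\mathbf r_0(t)=R_{\pi/2}^3\mathbf r_2(6t-1)$ for $t\in[\tfrac1{12},\tfrac16)$, $\mathbf r_0(t)=R_{\pi/2}^2\mathbf r_3(6t-\tfrac32)$ for $t\in[\tfrac16,\tfrac14)$. Define $\mathbf R:[0,1)\to S^2$ by $\mathbf R(t)=R_{\pi/2}^k\,\mathbf r_0(t-\tfrac k4)$ for $t\in[\tfrac k4,\tfrac{k+1}4)$, $k=0,1,2,3$,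 and extend $\mathbf R$ to $\mathbb R$ periodically with period $1$: $\mathbf R(t):=\mathbf R(t-\lfloor t\rfloor)$. *)

theory Defs
  imports "HOL-Analysis.Analysis" "HOL-Analysis.Cross3"
begin

definition r1 :: "real \<Rightarrow> real^3" where
  "r1 t = vector [1 / sqrt 2, t, sqrt (1/2 - t^2)]"

definition r2 :: "real \<Rightarrow> real^3" where
  "r2 t = vector [- ((1/2 + t) / (1 + t)), 1 / sqrt 2,
                  (1 / sqrt 2) * (sqrt (1/2 - t^2) / (1 + t))]"

definition r3 :: "real \<Rightarrow> real^3" where
  "r3 t = cross3 (r1 t) (r2 t)"

definition rot :: "real^3 \<Rightarrow> real^3" where
  "rot v = vector [- (v $ 2), v $ 1, v $ 3]"

text \<open>r0 on [0,1/4) (values outside this interval are irrelevant).\<close>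
definition r0 :: "real \<Rightarrow> real^3" where
  "r0 t = (if t < 1/12 then r1 (6*t - 1/2)
           else if t < 1/6 then (rot ^^ 3) (r2 (6*t - 1))
           else (rot ^^ 2) (r3 (6*t - 3/2)))"

text \<open>The curve R, 1-periodic: on [k/4,(k+1)/4) within [0,1) it is rot^k (r0 (t - k/4)).\<close>
definition Rc :: "real \<Rightarrow> real^3" where
  "Rc t = (let u = t - of_int \<lfloor>t\<rfloor>; k = nat \<lfloor>4 * u\<rfloor>
           in (rot ^^ k) (r0 (u - real k / 4)))"

end

theory Submission
  imports Defs
begin

text \<open>
  On each twelfth \<open>[i/12, (i+1)/12)\<close> of the period, \<open>Rc\<close> is \<open>rot ^^ (i div 3)\<close> applied to one of
  three arcs (\<open>r1\<close>, \<open>rot ^^ 3 \<circ> r2\<close>, \<open>rot ^^ 2 \<circ> r3\<close>) reparametrised over \<open>[-1/2, 0)\<close>.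
  Shifting the parameter by \<open>1/4\<close> rotates the whole curve, which preserves inner products, so
  \<open>t\<close> may be taken in \<open>[0, 1/4)\<close>; by symmetry of the inner product and periodicity one may
  also assume \<open>s - t \<le> 1/2\<close>. This leaves nine pairs of pieces. For each, up to positive
  factors the inner product is a polynomial in the parameters \<open>u, v\<close> and in
  \<open>a = sqrt (1/2 - u\<^sup>2)\<close>, \<open>b = sqrt (1/2 - v\<^sup>2)\<close>, \<open>h = 1 / sqrt 2\<close>; its sign reduces to an
  inequality between two nonnegative quantities, decided by comparing their squares.
\<close>

lemma vector3_eq_iff:
  "(vector [x1, x2, x3] :: real^3) = vector [y1, y2, y3] \<longleftrightarrow> x1 = y1 \<and> x2 = y2 \<and> x3 = y3"
  by (simp add: vec_eq_iff forall_3)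

lemma scaleR_vector3: "c *\<^sub>R vector [x1, x2, x3] = (vector [c * x1, c * x2, c * x3] :: real^3)"
  by (simp add: vec_eq_iff forall_3)

lemma inner_vector3:
  "(vector [x1, x2, x3] :: real^3) \<bullet> vector [y1, y2, y3] = x1 * y1 + x2 * y2 + x3 * y3"
  by (simp add: inner_vec_def sum_3)

lemma cross3_vector:
  "cross3 (vector [x1, x2, x3]) (vector [y1, y2, y3]) =
     vector [x2 * y3 - x3 * y2, x3 * y1 - x1 * y3, x1 * y2 - x2 * y1]"
  by (simp add: cross3_def vec_eq_iff forall_3)

lemma rot_vector: "rot (vector [x, y, z]) = vector [- y, x, z]"
  by (simp add: rot_def)

lemma funpow_rot_vector:
  "(rot ^^ 2) (vector [x, y, z]) = vector [- x, - y, z]"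
  "(rot ^^ 3) (vector [x, y, z]) = vector [y, - x, z]"
  by (simp_all add: rot_vector numeral_3_eq_3 numeral_2_eq_2)

lemma rot_scaleR: "rot (c *\<^sub>R x) = c *\<^sub>R rot x"
  by (simp add: rot_def vec_eq_iff forall_3)

lemma funpow_rot_scaleR: "(rot ^^ n) (c *\<^sub>R x) = c *\<^sub>R (rot ^^ n) x"
  by (induction n) (simp_all add: rot_scaleR)

lemma inner_rot: "rot x \<bullet> rot y = x \<bullet> y"
  by (simp add: rot_def inner_vec_def sum_3 algebra_simps)

lemma inner_funpow_rot: "(rot ^^ n) x \<bullet> (rot ^^ n) y = x \<bullet> y"
  by (induction n) (simp_all add: inner_rot)

lemma funpow_rot_4: "(rot ^^ 4) x = x"
  by (simp add: rot_def vec_eq_iff forall_3 eval_nat_numeral)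

lemma Rc_eq_funpow_rot_r0:
  fixes n :: int and k :: nat and \<tau> :: real
  assumes "k < 4" "0 \<le> \<tau>" "\<tau> < 1/4"
  shows "Rc (of_int n + real k / 4 + \<tau>) = (rot ^^ k) (r0 \<tau>)"
proof -
  have "real k \<le> 3" using assms(1) by simp
  then have floor_t: "\<lfloor>of_int n + real k / 4 + \<tau>\<rfloor> = n"
    using assms by (simp add: floor_eq_iff)
  have "\<lfloor>4 * (real k / 4 + \<tau>)\<rfloor> = int k"
    using assms by (simp add: floor_eq_iff algebra_simps)
  then show ?thesis
    unfolding Rc_def Let_def floor_t by simp
qed

lemma Rc_add_quarter: "Rc (t + 1/4) = rot (Rc t)"
proof -
  define k where "k = nat \<lfloor>4 * frac t\<rfloor>"
  define \<tau> where "\<tau> = frac t - real k / 4"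
  have "0 \<le> \<lfloor>4 * frac t\<rfloor>" by simp
  then have k: "real k \<le> 4 * frac t" "4 * frac t < real k + 1"
    unfolding k_def by linarith+
  have "k < 4" using k frac_lt_1[of t] by linarith
  have \<tau>: "0 \<le> \<tau>" "\<tau> < 1/4" unfolding \<tau>_def using k by linarith+
  have t: "t = of_int \<lfloor>t\<rfloor> + real k / 4 + \<tau>" unfolding \<tau>_def frac_def by simp
  have Rt: "Rc t = (rot ^^ k) (r0 \<tau>)" by (subst t) (rule Rc_eq_funpow_rot_r0[OF \<open>k < 4\<close> \<tau>])
  show ?thesis
  proof (cases "k = 3")
    case True
    have "t + 1/4 = of_int (\<lfloor>t\<rfloor> + 1) + real 0 / 4 + \<tau>" using t True by simp
    then have "Rc (t + 1/4) = r0 \<tau>" using Rc_eq_funpow_rot_r0[of 0 \<tau> "\<lfloor>t\<rfloor> + 1"] \<tau> by simp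
    also have "\<dots> = (rot ^^ 4) (r0 \<tau>)" by (rule funpow_rot_4[symmetric])
    finally show ?thesis using Rt True by (simp add: eval_nat_numeral)
  next
    case False
    then have "Suc k < 4" using \<open>k < 4\<close> by simp
    have "t + 1/4 = of_int \<lfloor>t\<rfloor> + real (Suc k) / 4 + \<tau>" using t by (simp add: field_simps)
    then show ?thesis using Rc_eq_funpow_rot_r0[OF \<open>Suc k < 4\<close> \<tau>] Rt by simp
  qed
qed

lemma Rc_add_quarters: "Rc (t + real k / 4) = (rot ^^ k) (Rc t)"
proof (induction k)
  case (Suc k)
  have "t + real (Suc k) / 4 = (t + real k / 4) + 1/4" by (simp add: field_simps)
  then show ?case using Suc by (simp only: Rc_add_quarter funpow.simps comp_apply)
qed simp

lemma Rc_periodic: "Rc (t + 1) = Rc t"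
  using Rc_add_quarters[of t 4] by (simp add: funpow_rot_4)

lemma inner_Rc_add_quarters:
  fixes z :: int
  shows "Rc (t + of_int z / 4) \<bullet> Rc (s + of_int z / 4) = Rc t \<bullet> Rc s"
proof (cases "0 \<le> z")
  case True
  then obtain k where "z = int k" using nonneg_int_cases by blast
  then show ?thesis by (simp add: Rc_add_quarters inner_funpow_rot)
next
  case False
  then obtain k where z: "z = - int k" using nonpos_int_cases by (metis linear)
  have "Rc t \<bullet> Rc s = Rc ((t - real k / 4) + real k / 4) \<bullet> Rc ((s - real k / 4) + real k / 4)"
    by simp
  also have "\<dots> = Rc (t - real k / 4) \<bullet> Rc (s - real k / 4)"
    by (simp only: Rc_add_quarters inner_funpow_rot)
  finally show ?thesis using z by simp
qed

definition piece :: "nat \<Rightarrow> real \<Rightarrow> real^3" where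
  "piece m x = (if m = 0 then r1 x else if m = 1 then (rot ^^ 3) (r2 x) else (rot ^^ 2) (r3 x))"

text \<open>With \<open>h = 1 / sqrt 2\<close> and \<open>a = sqrt (1/2 - x\<^sup>2)\<close>, \<open>piece_dir m h a x\<close> is a positive
  multiple of \<open>piece m x\<close>; keeping \<open>h\<close> and \<open>a\<close> as variables makes all inner products
  polynomial.\<close>

definition piece_dir :: "nat \<Rightarrow> real \<Rightarrow> real \<Rightarrow> real \<Rightarrow> real^3" where
  "piece_dir m h a x =
     (if m = 0 then vector [h, x, a]
      else if m = 1 then vector [h * (1 + x), 1/2 + x, h * a]
      else vector [h * a, a * (1 + x), 1/2 + x + x^2])"

lemma r0_eq_piece:
  assumes "m < 3" "0 \<le> l" "l < 1"
  shows "r0 ((real m + l) / 12) = piece m (l / 2 - 1/2)"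
proof -
  have "m = 0 \<or> m = 1 \<or> m = 2" using assms(1) by auto
  moreover have "6 * ((real m + l) / 12) - (1 + real m) / 2 = l / 2 - 1/2"
    by (simp add: field_simps)
  ultimately show ?thesis
    using assms by (auto simp: r0_def piece_def)
qed

lemma piece_eq_scaleR_piece_dir:
  assumes "-1/2 \<le> x"
  shows "\<exists>c \<ge> 0. piece m x = c *\<^sub>R piece_dir m (1 / sqrt 2) (sqrt (1/2 - x^2)) x"
proof -
  define h where "h = 1 / sqrt (2::real)"
  define a where "a = sqrt (1/2 - x^2)"
  define c where "c = 1 / (1 + x)"
  have hh: "h * h = 1/2" unfolding h_def by simp
  have c: "c * (1 + x) = 1" "0 \<le> c" unfolding c_def using assms by simp_all
  have r1: "r1 x = vector [h, x, a]" unfolding r1_def h_def a_def ..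
  have r2: "r2 x = vector [- ((1/2 + x) * c), h, h * a * c]"
    unfolding r2_def h_def a_def c_def by simp
  have "piece 0 x = 1 *\<^sub>R piece_dir 0 h a x"
    unfolding piece_def piece_dir_def r1 by simp
  moreover have "piece 1 x = c *\<^sub>R piece_dir 1 h a x"
    unfolding piece_def piece_dir_def r2
    by (simp add: funpow_rot_vector scaleR_vector3 vector3_eq_iff) (use c(1) in algebra)
  moreover have "piece m x = c *\<^sub>R piece_dir m h a x" if "2 \<le> m"
    using that unfolding piece_def piece_dir_def r3_def r1 r2
    by (simp add: cross3_vector funpow_rot_vector scaleR_vector3 vector3_eq_iff)
      (use c(1) hh in algebra)
  moreover have "m = 0 \<or> m = 1 \<or> 2 \<le> m" by linarith
  ultimately show ?thesis
    unfolding h_def[symmetric] a_def[symmetric] using c(2) zero_le_one by blast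
qed

locale piece_params =
  fixes u v a b h :: real
  assumes u: "-1/2 \<le> u" "u \<le> 0" and v: "-1/2 \<le> v" "v \<le> 0"
    and a: "0 \<le> a" "a^2 = 1/2 - u^2" and b: "0 \<le> b" "b^2 = 1/2 - v^2"
    and h: "0 \<le> h" "h^2 = 1/2"
begin

text \<open>Each inequality below is proved by comparing squares, with the difference written
  as a polynomial with nonnegative coefficients in these quantities and \<open>duv\<close>.\<close>

definition "pu = 1 + 2 * u"
definition "nu = - (2 * u)"
definition "pv = 1 + 2 * v"
definition "nv = - (2 * v)"
definition "duv = 2 * (v - u)"

lemmas slack_defs = pu_def nu_def pv_def nv_def duv_def

lemma slack_nonneg: "0 \<le> pu" "0 \<le> nu" "0 \<le> pv" "0 \<le> nv"
  using u v unfolding slack_defs by simp_all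

lemma duv_nonneg: "u \<le> v \<Longrightarrow> 0 \<le> duv"
  unfolding duv_def by simp

lemmas cert_nonneg = add_nonneg_nonneg mult_nonneg_nonneg zero_le_power slack_nonneg

lemma uv_bounds: "0 \<le> u * v" "u * v \<le> 1/4"
proof -
  show "0 \<le> u * v" using u v by (simp add: zero_le_mult_iff)
  have "(- u) * (- v) \<le> (1/2) * (1/2)" using u v by (intro mult_mono) auto
  then show "u * v \<le> 1/4" by simp
qed

text \<open>In \<open>inner_piece_dir_m_j\<close>, piece \<open>m\<close> of the first quarter period meets piece \<open>j\<close> of the
  period, that is \<open>rot ^^ (j div 3)\<close> applied to piece \<open>j mod 3\<close>.\<close>

lemma inner_piece_dir_0_4:
  assumes "u \<le> v"
  shows "piece_dir 0 h a u \<bullet> (rot ^^ 1) (piece_dir 1 h b v) \<le> 0"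
proof -
  have "a * b \<le> 1/2 + v - u - u * v"
  proof (rule power2_le_imp_le)
    have "(1/2 + v - u - u * v)^2 - (a * b)^2 =
        pu * duv * nv + (9/8) * duv^2 * nv + (1/4) * duv * nv^2 + (1/2) * pu^2 * duv +
        (11/8) * pu * duv^2 + (7/8) * duv^3" (is "_ = ?C")
      unfolding slack_defs
      by (simp add: power_mult_distrib a(2) b(2) h(2)) (simp add: field_simps eval_nat_numeral)
    moreover have "0 \<le> ?C" by (intro cert_nonneg duv_nonneg[OF assms]) simp_all
    ultimately show "(a * b)^2 \<le> (1/2 + v - u - u * v)^2" by linarith
    show "0 \<le> 1/2 + v - u - u * v" using assms uv_bounds by linarith
  qed
  moreover have "piece_dir 0 h a u \<bullet> (rot ^^ 1) (piece_dir 1 h b v) =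
      h * (a * b - (1/2 + v - u - u * v))"
    by (simp add: piece_dir_def rot_vector funpow_rot_vector inner_vector3 algebra_simps)
  ultimately show ?thesis using h(1) by (simp add: mult_nonneg_nonpos)
qed

lemma inner_piece_dir_0_5:
  "piece_dir 0 h a u \<bullet> (rot ^^ 1) (piece_dir 2 h b v) \<le> 0"
proof -
  have "a * (1/2 + v + v^2) \<le> h * b * (1 + v - u)"
  proof (rule power2_le_imp_le)
    have "(h * b * (1 + v - u))^2 - (a * (1/2 + v + v^2))^2 =
        (7/64) * nu^2 * nv^4 + (13/16) * nu^2 * pv * nv^3 + (61/32) * nu^2 * pv^2 * nv^2 +
        (7/4) * nu^2 * pv^3 * nv + (1/2) * nu^2 * pv^4 + (1/16) * pu * nu * nv^4 +
        (11/16) * pu * nu * pv * nv^3 + (15/8) * pu * nu * pv^2 * nv^2 +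
        (15/8) * pu * nu * pv^3 * nv + (1/2) * pu * nu * pv^4 + (1/8) * pu^2 * pv * nv^3 +
        (7/16) * pu^2 * pv^2 * nv^2 + (1/2) * pu^2 * pv^3 * nv + (1/8) * pu^2 * pv^4" (is "_ = ?C")
      unfolding slack_defs
      by (simp add: power_mult_distrib a(2) b(2) h(2)) (simp add: field_simps eval_nat_numeral)
    moreover have "0 \<le> ?C" by (intro cert_nonneg) simp_all
    ultimately show "(a * (1/2 + v + v^2))^2 \<le> (h * b * (1 + v - u))^2" by linarith
    show "0 \<le> h * b * (1 + v - u)" using u v a(1) b(1) h(1) uv_bounds
      by (auto intro!: mult_nonneg_nonneg add_nonneg_nonneg)
  qed
  moreover have "piece_dir 0 h a u \<bullet> (rot ^^ 1) (piece_dir 2 h b v) =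
      a * (1/2 + v + v^2) - (h * b * (1 + v - u))"
    by (simp add: piece_dir_def rot_vector funpow_rot_vector inner_vector3 algebra_simps)
  ultimately show ?thesis using h(1) by (simp add: mult_nonneg_nonpos)
qed

lemma inner_piece_dir_0_6:
  "piece_dir 0 h a u \<bullet> (rot ^^ 2) (piece_dir 0 h b v) \<le> 0"
proof -
  have "a * b \<le> 1/2 + u * v"
  proof (rule power2_le_imp_le)
    have "(1/2 + u * v)^2 - (a * b)^2 =
        (1/2) * nu^2 * nv^2 + (1/2) * nu^2 * pv * nv + (1/8) * nu^2 * pv^2 +
        (1/2) * pu * nu * nv^2 + (1/4) * pu * nu * pv * nv + (1/8) * pu^2 * nv^2" (is "_ = ?C")
      unfolding slack_defs
      by (simp add: power_mult_distrib a(2) b(2) h(2)) (simp add: field_simps eval_nat_numeral)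
    moreover have "0 \<le> ?C" by (intro cert_nonneg) simp_all
    ultimately show "(a * b)^2 \<le> (1/2 + u * v)^2" by linarith
    show "0 \<le> 1/2 + u * v" using u v a(1) b(1) h(1) uv_bounds
      by (auto intro!: mult_nonneg_nonneg add_nonneg_nonneg)
  qed
  moreover have "piece_dir 0 h a u \<bullet> (rot ^^ 2) (piece_dir 0 h b v) = a * b - (1/2 + u * v)"
    by (simp add: piece_dir_def rot_vector funpow_rot_vector inner_vector3) (use h(2) in algebra)
  ultimately show ?thesis using h(1) by (simp add: mult_nonneg_nonpos)
qed

lemma inner_piece_dir_1_5:
  assumes "u \<le> v"
  shows "piece_dir 1 h a u \<bullet> (rot ^^ 1) (piece_dir 2 h b v) \<le> 0"
proof -
  have "a * (1/2 + v + v^2) \<le> b * (1/2 + v + u * v)"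
  proof (rule power2_le_imp_le)
    have "(b * (1/2 + v + u * v))^2 - (a * (1/2 + v + v^2))^2 =
        (1/4) * pu^3 * duv * nv + (13/16) * pu^2 * duv^2 * nv + (3/8) * pu^2 * duv * nv^2 +
        (7/8) * pu * duv^3 * nv + (27/32) * pu * duv^2 * nv^2 + (5/16) * duv^4 * nv +
        (15/32) * duv^3 * nv^2 + (9/32) * duv^2 * nv^3 + (1/16) * duv * nv^4 +
        (1/4) * pu * duv * nv^3 + (1/16) * pu^3 * duv^2 + (3/16) * pu^2 * duv^3 +
        (3/16) * pu * duv^4 + (1/16) * duv^5" (is "_ = ?C")
      unfolding slack_defs
      by (simp add: power_mult_distrib a(2) b(2) h(2)) (simp add: field_simps eval_nat_numeral)
    moreover have "0 \<le> ?C" by (intro cert_nonneg duv_nonneg[OF assms]) simp_all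
    ultimately show "(a * (1/2 + v + v^2))^2 \<le> (b * (1/2 + v + u * v))^2" by linarith
    show "0 \<le> b * (1/2 + v + u * v)" using u v a(1) b(1) h(1) uv_bounds
      by (auto intro!: mult_nonneg_nonneg add_nonneg_nonneg)
  qed
  moreover have "piece_dir 1 h a u \<bullet> (rot ^^ 1) (piece_dir 2 h b v) =
      h * (a * (1/2 + v + v^2) - (b * (1/2 + v + u * v)))"
    by (simp add: piece_dir_def rot_vector funpow_rot_vector inner_vector3 algebra_simps)
  ultimately show ?thesis using h(1) by (simp add: mult_nonneg_nonpos)
qed

lemma inner_piece_dir_1_6:
  "piece_dir 1 h a u \<bullet> (rot ^^ 2) (piece_dir 0 h b v) \<le> 0"
proof -
  have "h * a * b \<le> 1/2 + u/2 + v/2 + u * v"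
  proof (rule power2_le_imp_le)
    have "(1/2 + u/2 + v/2 + u * v)^2 - (h * a * b)^2 =
        (1/2) * (u * v + u + v + 1/2)^2" (is "_ = ?C")
      by (simp add: power_mult_distrib a(2) b(2) h(2)) (simp add: field_simps eval_nat_numeral)
    moreover have "0 \<le> ?C" by simp
    ultimately show "(h * a * b)^2 \<le> (1/2 + u/2 + v/2 + u * v)^2" by linarith
    show "0 \<le> 1/2 + u/2 + v/2 + u * v" using u v a(1) b(1) h(1) uv_bounds
      by (auto intro!: mult_nonneg_nonneg add_nonneg_nonneg)
  qed
  moreover have "piece_dir 1 h a u \<bullet> (rot ^^ 2) (piece_dir 0 h b v) =
      h * a * b - (1/2 + u/2 + v/2 + u * v)"
    by (simp add: piece_dir_def rot_vector funpow_rot_vector inner_vector3) (use h(2) in algebra)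
  ultimately show ?thesis using h(1) by (simp add: mult_nonneg_nonpos)
qed

lemma inner_piece_dir_1_7:
  "piece_dir 1 h a u \<bullet> (rot ^^ 2) (piece_dir 1 h b v) \<le> 0"
proof -
  have "a * b \<le> (1 + u) * (1 + v) + 2 * (1/2 + u) * (1/2 + v)"
  proof (rule power2_le_imp_le)
    have "((1 + u) * (1 + v) + 2 * (1/2 + u) * (1/2 + v))^2 - (a * b)^2 =
        (1/8) * nu^2 * pv^2 + (1/4) * pu * nu * pv * nv + pu * nu * pv^2 +
        (1/8) * pu^2 * nv^2 + pu^2 * pv * nv + 2 * pu^2 * pv^2" (is "_ = ?C")
      unfolding slack_defs
      by (simp add: power_mult_distrib a(2) b(2) h(2)) (simp add: field_simps eval_nat_numeral)
    moreover have "0 \<le> ?C" by (intro cert_nonneg) simp_all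
    ultimately show "(a * b)^2 \<le> ((1 + u) * (1 + v) + 2 * (1/2 + u) * (1/2 + v))^2" by linarith
    show "0 \<le> (1 + u) * (1 + v) + 2 * (1/2 + u) * (1/2 + v)" using u v a(1) b(1) h(1) uv_bounds
      by (auto intro!: mult_nonneg_nonneg add_nonneg_nonneg)
  qed
  moreover have "piece_dir 1 h a u \<bullet> (rot ^^ 2) (piece_dir 1 h b v) =
      1/2 * (a * b - ((1 + u) * (1 + v) + 2 * (1/2 + u) * (1/2 + v)))"
    by (simp add: piece_dir_def rot_vector funpow_rot_vector inner_vector3) (use h(2) in algebra)
  ultimately show ?thesis using h(1) by (simp add: mult_nonneg_nonpos)
qed

lemma inner_piece_dir_2_6:
  assumes "u \<le> v"
  shows "piece_dir 2 h a u \<bullet> (rot ^^ 2) (piece_dir 0 h b v) \<le> 0"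
proof -
  have "b * (1/2 + u + u^2) \<le> a * (1/2 + v + u * v)"
  proof (rule power2_le_imp_le)
    have "(a * (1/2 + v + u * v))^2 - (b * (1/2 + u + u^2))^2 =
        (1/4) * pu^2 * duv * nv + (1/8) * pu * duv * nv^2 + (1/16) * duv^3 * nv +
        (1/32) * duv^2 * nv^2 + (7/16) * pu^2 * duv^2 + (1/4) * pu * duv^3 + (1/32) * duv^4 +
        (1/4) * pu^3 * duv + (3/8) * pu * duv^2 * nv" (is "_ = ?C")
      unfolding slack_defs
      by (simp add: power_mult_distrib a(2) b(2) h(2)) (simp add: field_simps eval_nat_numeral)
    moreover have "0 \<le> ?C" by (intro cert_nonneg duv_nonneg[OF assms]) simp_all
    ultimately show "(b * (1/2 + u + u^2))^2 \<le> (a * (1/2 + v + u * v))^2" by linarith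
    show "0 \<le> a * (1/2 + v + u * v)" using u v a(1) b(1) h(1) uv_bounds
      by (auto intro!: mult_nonneg_nonneg add_nonneg_nonneg)
  qed
  moreover have "piece_dir 2 h a u \<bullet> (rot ^^ 2) (piece_dir 0 h b v) =
      b * (1/2 + u + u^2) - (a * (1/2 + v + u * v))"
    by (simp add: piece_dir_def rot_vector funpow_rot_vector inner_vector3) (use h(2) in algebra)
  ultimately show ?thesis using h(1) by (simp add: mult_nonneg_nonpos)
qed

lemma inner_piece_dir_2_7:
  "piece_dir 2 h a u \<bullet> (rot ^^ 2) (piece_dir 1 h b v) \<le> 0"
proof -
  have "h * b * (1/2 + u + u^2) \<le> a * ((1 + v) / 2 + (1/2 + v) * (1 + u))"
  proof (rule power2_le_imp_le)
    have "(a * ((1 + v) / 2 + (1/2 + v) * (1 + u)))^2 - (h * b * (1/2 + u + u^2))^2 =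
        (1/128) * nv^2 * nu^4 + (1/16) * nv^2 * pu * nu^3 + (7/64) * nv^2 * pu^2 * nu^2 +
        (1/16) * nv^2 * pu^3 * nu + (1/16) * pv * nv * nu^4 + (15/32) * pv * nv * pu * nu^3 +
        (15/16) * pv * nv * pu^2 * nu^2 + (11/16) * pv * nv * pu^3 * nu + (1/8) * pv * nv * pu^4 +
        (1/8) * pv^2 * nu^4 + (7/8) * pv^2 * pu * nu^3 + (61/32) * pv^2 * pu^2 * nu^2 +
        (13/8) * pv^2 * pu^3 * nu + (7/16) * pv^2 * pu^4" (is "_ = ?C")
      unfolding slack_defs
      by (simp add: power_mult_distrib a(2) b(2) h(2)) (simp add: field_simps eval_nat_numeral)
    moreover have "0 \<le> ?C" by (intro cert_nonneg) simp_all
    ultimately show "(h * b * (1/2 + u + u^2))^2 \<le> (a * ((1 + v) / 2 + (1/2 + v) * (1 + u)))^2" by linarith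
    show "0 \<le> a * ((1 + v) / 2 + (1/2 + v) * (1 + u))" using u v a(1) b(1) h(1) uv_bounds
      by (auto intro!: mult_nonneg_nonneg add_nonneg_nonneg)
  qed
  moreover have "piece_dir 2 h a u \<bullet> (rot ^^ 2) (piece_dir 1 h b v) =
      h * b * (1/2 + u + u^2) - (a * ((1 + v) / 2 + (1/2 + v) * (1 + u)))"
    by (simp add: piece_dir_def rot_vector funpow_rot_vector inner_vector3) (use h(2) in algebra)
  ultimately show ?thesis using h(1) by (simp add: mult_nonneg_nonpos)
qed

lemma inner_piece_dir_2_8:
  "piece_dir 2 h a u \<bullet> (rot ^^ 2) (piece_dir 2 h b v) \<le> 0"
proof -
  have "(1/2 + u + u^2) * (1/2 + v + v^2) \<le> a * b * (1/2 + (1 + u) * (1 + v))"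
  proof (rule power2_le_imp_le)
    have "(a * b * (1/2 + (1 + u) * (1 + v)))^2 - ((1/2 + u + u^2) * (1/2 + v + v^2))^2 =
        (1/32) * nu^4 * nv^4 + (7/32) * nu^4 * pv * nv^3 + (61/128) * nu^4 * pv^2 * nv^2 +
        (13/32) * nu^4 * pv^3 * nv + (7/64) * nu^4 * pv^4 + (7/32) * pu * nu^3 * nv^4 +
        (97/64) * pu * nu^3 * pv * nv^3 + (107/32) * pu * nu^3 * pv^2 * nv^2 +
        (93/32) * pu * nu^3 * pv^3 * nv + (13/16) * pu * nu^3 * pv^4 +
        (61/128) * pu^2 * nu^2 * nv^4 + (107/32) * pu^2 * nu^2 * pv * nv^3 +
        (241/32) * pu^2 * nu^2 * pv^2 * nv^2 + (107/16) * pu^2 * nu^2 * pv^3 * nv +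
        (61/32) * pu^2 * nu^2 * pv^4 + (13/32) * pu^3 * nu * nv^4 +
        (93/32) * pu^3 * nu * pv * nv^3 + (107/16) * pu^3 * nu * pv^2 * nv^2 +
        (97/16) * pu^3 * nu * pv^3 * nv + (7/4) * pu^3 * nu * pv^4 + (7/64) * pu^4 * nv^4 +
        (13/16) * pu^4 * pv * nv^3 + (61/32) * pu^4 * pv^2 * nv^2 + (7/4) * pu^4 * pv^3 * nv +
        (1/2) * pu^4 * pv^4" (is "_ = ?C")
      unfolding slack_defs
      by (simp add: power_mult_distrib a(2) b(2) h(2)) (simp add: field_simps eval_nat_numeral)
    moreover have "0 \<le> ?C" by (intro cert_nonneg) simp_all
    ultimately show "((1/2 + u + u^2) * (1/2 + v + v^2))^2 \<le> (a * b * (1/2 + (1 + u) * (1 + v)))^2" by linarith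
    show "0 \<le> a * b * (1/2 + (1 + u) * (1 + v))" using u v a(1) b(1) h(1) uv_bounds
      by (auto intro!: mult_nonneg_nonneg add_nonneg_nonneg)
  qed
  moreover have "piece_dir 2 h a u \<bullet> (rot ^^ 2) (piece_dir 2 h b v) =
      (1/2 + u + u^2) * (1/2 + v + v^2) - (a * b * (1/2 + (1 + u) * (1 + v)))"
    by (simp add: piece_dir_def rot_vector funpow_rot_vector inner_vector3) (use h(2) in algebra)
  ultimately show ?thesis using h(1) by (simp add: mult_nonneg_nonpos)
qed

lemma inner_piece_dir_nonpos:
  assumes "m < 3" "m + 4 \<le> j" "j \<le> m + 6" "j = m + 4 \<Longrightarrow> u \<le> v"
  shows "piece_dir m h a u \<bullet> (rot ^^ (j div 3)) (piece_dir (j mod 3) h b v) \<le> 0"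
proof -
  have "m = 0 \<and> j \<in> {4, 5, 6} \<or> m = 1 \<and> j \<in> {5, 6, 7} \<or> m = 2 \<and> j \<in> {6, 7, 8}"
    using assms(1-3) by auto
  then show ?thesis
    using assms(4) inner_piece_dir_0_4 inner_piece_dir_0_5 inner_piece_dir_0_6 inner_piece_dir_1_5
      inner_piece_dir_1_6 inner_piece_dir_1_7 inner_piece_dir_2_6 inner_piece_dir_2_7 inner_piece_dir_2_8
    by auto
qed

end

lemma inner_piece_nonpos:
  assumes "-1/2 \<le> x" "x \<le> 0" "-1/2 \<le> y" "y \<le> 0"
    and "m < 3" "m + 4 \<le> j" "j \<le> m + 6" "j = m + 4 \<Longrightarrow> x \<le> y"
  shows "piece m x \<bullet> (rot ^^ (j div 3)) (piece (j mod 3) y) \<le> 0"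
proof -
  define a where "a = sqrt (1/2 - x^2)"
  define b where "b = sqrt (1/2 - y^2)"
  obtain c where c: "0 \<le> c" "piece m x = c *\<^sub>R piece_dir m (1 / sqrt 2) a x"
    using piece_eq_scaleR_piece_dir[OF assms(1)] unfolding a_def by blast
  obtain e where e: "0 \<le> e" "piece (j mod 3) y = e *\<^sub>R piece_dir (j mod 3) (1 / sqrt 2) b y"
    using piece_eq_scaleR_piece_dir[OF assms(3)] unfolding b_def by blast
  have "z^2 \<le> 1/2" if "-1/2 \<le> z" "z \<le> 0" for z :: real
    using power_mono[of "- z" "1/2" 2] that by (simp add: power2_eq_square)
  then interpret piece_params x y a b "1 / sqrt 2"
    using assms(1-4) unfolding a_def b_def by unfold_locales (simp_all add: power_divide)
  have "piece_dir m (1 / sqrt 2) a x \<bullet> (rot ^^ (j div 3)) (piece_dir (j mod 3) (1 / sqrt 2) b y) \<le> 0"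
    using inner_piece_dir_nonpos assms(5-8) by blast
  then show ?thesis
    using c e by (simp add: funpow_rot_scaleR mult_nonneg_nonpos mult_nonneg_nonneg)
qed

lemma Rc_eq_piece:
  assumes "i < 12" "0 \<le> l" "l < 1"
  shows "Rc ((real i + l) / 12) = (rot ^^ (i div 3)) (piece (i mod 3) (l / 2 - 1/2))"
proof -
  have "real i = 3 * real (i div 3) + real (i mod 3)"
    by (metis div_mult_mod_eq mult.commute of_nat_add of_nat_mult of_nat_numeral)
  then have "(real i + l) / 12 = of_int 0 + real (i div 3) / 4 + (real (i mod 3) + l) / 12"
    by (simp add: field_simps)
  moreover have "i div 3 < 4" "i mod 3 < 3" using assms(1) by auto
  moreover have "0 \<le> (real (i mod 3) + l) / 12" "(real (i mod 3) + l) / 12 < 1/4"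
    using assms(2,3) \<open>i mod 3 < 3\<close> by auto
  ultimately show ?thesis
    using assms(2,3) by (simp only: Rc_eq_funpow_rot_r0 r0_eq_piece)
qed

lemma Rc_inner_nonpos_first_quarter:
  assumes "0 \<le> t" "t < 1/4" "t + 1/3 \<le> s" "s \<le> t + 1/2"
  shows "Rc t \<bullet> Rc s \<le> 0"
proof -
  define m where "m = nat \<lfloor>12 * t\<rfloor>"
  define j where "j = nat \<lfloor>12 * s\<rfloor>"
  define l where "l = 12 * t - real m"
  define \<mu> where "\<mu> = 12 * s - real j"
  have "0 \<le> \<lfloor>12 * t\<rfloor>" "0 \<le> \<lfloor>12 * s\<rfloor>" using assms by simp_all
  then have "real m = of_int \<lfloor>12 * t\<rfloor>" "real j = of_int \<lfloor>12 * s\<rfloor>"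
    unfolding m_def j_def by simp_all
  then have l: "0 \<le> l" "l < 1" and \<mu>: "0 \<le> \<mu>" "\<mu> < 1"
    using floor_correct[of "12 * t"] floor_correct[of "12 * s"]
    unfolding l_def \<mu>_def by linarith+
  have "real m < 3" "real m + 4 \<le> 12 * s" "real j < real m + 7"
    using assms l \<mu> unfolding l_def \<mu>_def by auto
  then have "m < 3" "m + 4 \<le> j" "j < m + 7"
    unfolding j_def by (linarith, metis of_nat_add of_nat_numeral le_nat_floor, linarith)
  then have mj: "m < 3" "j < 12" "m + 4 \<le> j" "j \<le> m + 6"
    by linarith+
  have "j = m + 4 \<Longrightarrow> l \<le> \<mu>"
    using assms unfolding l_def \<mu>_def by auto
  have "Rc t = piece m (l / 2 - 1/2)"
    using Rc_eq_piece[of m l] mj l unfolding l_def by simp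
  moreover have "Rc s = (rot ^^ (j div 3)) (piece (j mod 3) (\<mu> / 2 - 1/2))"
    using Rc_eq_piece[of j \<mu>] mj \<mu> unfolding \<mu>_def by simp
  ultimately show ?thesis
    using inner_piece_nonpos[of "l / 2 - 1/2" "\<mu> / 2 - 1/2" m j] mj \<open>j = m + 4 \<Longrightarrow> l \<le> \<mu>\<close> l \<mu>
    by simp
qed

lemma Rc_inner_nonpos_short_gap:
  assumes "t + 1/3 \<le> s" "s \<le> t + 1/2"
  shows "Rc t \<bullet> Rc s \<le> 0"
proof -
  define z where "z = - \<lfloor>4 * t\<rfloor>"
  have "0 \<le> t + of_int z / 4" "t + of_int z / 4 < 1/4"
    using floor_correct[of "4 * t"] unfolding z_def by linarith+
  then have "Rc (t + of_int z / 4) \<bullet> Rc (s + of_int z / 4) \<le> 0"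
    using assms by (intro Rc_inner_nonpos_first_quarter) auto
  then show ?thesis by (simp only: inner_Rc_add_quarters)
qed

theorem lemma3p2:
  fixes t s :: real
  assumes "t + 1/3 \<le> s" and "s < t + 2/3"
  shows "Rc t \<bullet> Rc s \<le> 0"
proof (cases "s \<le> t + 1/2")
  case True
  then show ?thesis using assms(1) by (rule Rc_inner_nonpos_short_gap[rotated])
next
  case False
  then have "Rc s \<bullet> Rc (t + 1) \<le> 0"
    using assms(2) by (intro Rc_inner_nonpos_short_gap) auto
  then show ?thesis by (simp add: Rc_periodic inner_commute)
qed

end
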